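(* There exist a Cantor space $(X,d)$ and a homeomorphism $f$ of $X$ such that: (1) $X=\overline{Per(f)}$; (2) $f$ is equicontinuous; (3) $f$ has the periodic shadowing property; (4) $f$ does not have the strict periodic shadowing property; (5) $f^3$ has the strict periodic shadowing property.
   Context: A Cantor space is a compact metric space without isolated points that is totally disconnected. $Per(f)$ is the set of periodic points. Equicontinuous: for every $\epsilon>0$ there is $\delta>0$ with $d(x,y)\le\delta\Rightarrow\sup_{i\in\mathbb{Z}}d(f^i(x),f^i(y))\le\epsilon$. A $\delta$-cycle of a map $F$ is $(x_i)_{i=0}^m$, $m\ge1$, with $d(F(x_i),x_{i+1})\le\delta$ for $0\le i<m$ and $x_0=x_m$. $F$ has the periodic shadowing property if for every $\epsilon>0$ there is $\delta>0$ such that for every $\delta$-cycle $(x_i)_{i=0}^m$ of $F$ there is $p\in Per(F)$ with $d(x_i,F^i(p))\le\epsilon$ for $0\le i\le m$; $F$ has the strict periodic shadowing property if the same holds with $p$ required to satisfy $F^m(p)=p$. *)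

theory Defs
  imports "HOL-Analysis.Analysis"
begin

definition cantor_space :: "'a set \<Rightarrow> ('a \<Rightarrow> 'a \<Rightarrow> real) \<Rightarrow> bool" where
  "cantor_space X d \<longleftrightarrow>
     Metric_space X d \<and> X \<noteq> {} \<and>
     compact_space (Metric_space.mtopology X d) \<and>
     (\<forall>x\<in>X. x \<in> (Metric_space.mtopology X d) derived_set_of X) \<and>
     (\<forall>S. S \<subseteq> X \<and> connectedin (Metric_space.mtopology X d) S
            \<longrightarrow> (\<forall>x\<in>S. \<forall>y\<in>S. x = y))"

definition zpow :: "'a set \<Rightarrow> ('a \<Rightarrow> 'a) \<Rightarrow> int \<Rightarrow> 'a \<Rightarrow> 'a" where
  "zpow X f i = (if 0 \<le> i then f ^^ nat i else (inv_into X f) ^^ nat (- i))"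

definition Per :: "'a set \<Rightarrow> ('a \<Rightarrow> 'a) \<Rightarrow> 'a set" where
  "Per X f = {x \<in> X. \<exists>n>0. (f ^^ n) x = x}"

definition equicontinuous_homeo :: "'a set \<Rightarrow> ('a \<Rightarrow> 'a \<Rightarrow> real) \<Rightarrow> ('a \<Rightarrow> 'a) \<Rightarrow> bool" where
  "equicontinuous_homeo X d f \<longleftrightarrow>
     (\<forall>e>0. \<exists>\<delta>>0. \<forall>x\<in>X. \<forall>y\<in>X. d x y \<le> \<delta> \<longrightarrow>
        (\<forall>i::int. d (zpow X f i x) (zpow X f i y) \<le> e))"

definition delta_cycle :: "'a set \<Rightarrow> ('a \<Rightarrow> 'a \<Rightarrow> real) \<Rightarrow> ('a \<Rightarrow> 'a) \<Rightarrow> real \<Rightarrow> (nat \<Rightarrow> 'a) \<Rightarrow> nat \<Rightarrow> bool" where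
  "delta_cycle X d F \<delta> x m \<longleftrightarrow>
     1 \<le> m \<and> (\<forall>i\<le>m. x i \<in> X) \<and> (\<forall>i<m. d (F (x i)) (x (Suc i)) \<le> \<delta>) \<and> x 0 = x m"

definition periodic_shadowing :: "'a set \<Rightarrow> ('a \<Rightarrow> 'a \<Rightarrow> real) \<Rightarrow> ('a \<Rightarrow> 'a) \<Rightarrow> bool" where
  "periodic_shadowing X d F \<longleftrightarrow>
     (\<forall>e>0. \<exists>\<delta>>0. \<forall>x m. delta_cycle X d F \<delta> x m \<longrightarrow>
        (\<exists>p\<in>Per X F. \<forall>i\<le>m. d (x i) ((F ^^ i) p) \<le> e))"

definition strict_periodic_shadowing :: "'a set \<Rightarrow> ('a \<Rightarrow> 'a \<Rightarrow> real) \<Rightarrow> ('a \<Rightarrow> 'a) \<Rightarrow> bool" where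
  "strict_periodic_shadowing X d F \<longleftrightarrow>
     (\<forall>e>0. \<exists>\<delta>>0. \<forall>x m. delta_cycle X d F \<delta> x m \<longrightarrow>
        (\<exists>p\<in>Per X F. (F ^^ m) p = p \<and> (\<forall>i\<le>m. d (x i) ((F ^^ i) p) \<le> e)))"

end

theory Submission
  imports Defs
begin

text \<open>A point of the space is a sequence c whose n-th entry is either a residue modulo
  2^(n+1) or one of three extra marked values, with at most one marked entry; the metric is the
  first-difference ultrametric. The map adds 1 to every entry before the first marked one, the
  marked entry cycles through its three values, and later entries are frozen. This is an isometry
  of a compact ultrametric space, so a delta-pseudo-orbit stays delta-close to the true orbit of
  its starting point; periodic shadowing then follows from the density of the periodic points,
  which are the marked sequences.
  Strict periodic shadowing fails: the point marked at j returns 2^-j-close to itself after 2^j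
  steps, but no point is fixed by f^(2^j) because 3 does not divide 2^j.
  For f^3 the three marked values are invisible: if f^(3m) moves x by at most 2^-N, then 2^(n+1)
  divides 3m for every unmarked entry n < N, and marking x at an entry \<le> N gives a nearby point
  fixed by f^(3m).\<close>

section \<open>Isometries of ultrametric spaces\<close>

lemma delta_cycle_mono: "\<lbrakk>delta_cycle M d F \<delta> x m; \<delta> \<le> \<delta>'\<rbrakk> \<Longrightarrow> delta_cycle M d F \<delta>' x m"
  by (auto simp: delta_cycle_def intro: order_trans)

locale metric_isometry = Metric_space M d for M :: "'a set" and d +
  fixes f :: "'a \<Rightarrow> 'a"
  assumes bij: "bij_betw f M M"
    and isometric: "\<lbrakk>x \<in> M; y \<in> M\<rbrakk> \<Longrightarrow> d (f x) (f y) = d x y"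
begin

lemma maps_into: "x \<in> M \<Longrightarrow> f x \<in> M"
  using bij bij_betwE by blast

lemma funpow_in: "x \<in> M \<Longrightarrow> (f ^^ n) x \<in> M"
  by (induction n) (auto simp: maps_into)

lemma funpow_isometric: "\<lbrakk>x \<in> M; y \<in> M\<rbrakk> \<Longrightarrow> d ((f ^^ n) x) ((f ^^ n) y) = d x y"
  by (induction n) (auto simp: isometric funpow_in)

lemma metric_isometry_funpow: "metric_isometry M d (f ^^ n)"
  by unfold_locales (auto simp: bij_betw_funpow bij funpow_isometric)

lemma metric_isometry_inverse: "metric_isometry M d (inv_into M f)"
proof
  show "bij_betw (inv_into M f) M M"
    by (rule bij_betw_inv_into[OF bij])
  fix x y assume "x \<in> M" "y \<in> M"
  have "inv_into M f x \<in> M" "inv_into M f y \<in> M"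
    using bij_betw_inv_into[OF bij] \<open>x \<in> M\<close> \<open>y \<in> M\<close> bij_betwE by blast+
  then have "d (inv_into M f x) (inv_into M f y) = d (f (inv_into M f x)) (f (inv_into M f y))"
    by (simp add: isometric)
  also have "\<dots> = d x y"
    using bij_betw_inv_into_right[OF bij] \<open>x \<in> M\<close> \<open>y \<in> M\<close> by simp
  finally show "d (inv_into M f x) (inv_into M f y) = d x y" .
qed

lemma homeomorphic: "homeomorphic_map mtopology mtopology f"
  by (rule Metric_space12.isometry_imp_homeomorphic_map)
    (use bij isometric in \<open>auto simp: Metric_space12_def Metric_space_axioms bij_betw_def\<close>)

lemma zpow_isometric: "\<lbrakk>x \<in> M; y \<in> M\<rbrakk> \<Longrightarrow> d (zpow M f i x) (zpow M f i y) = d x y"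
  using metric_isometry.funpow_isometric[OF metric_isometry_inverse]
  by (simp add: zpow_def funpow_isometric)

lemma equicontinuous: "equicontinuous_homeo M d f"
  unfolding equicontinuous_homeo_def by (metis zpow_isometric)

lemma not_strict_periodic_shadowing_if_unclosable:
  assumes "\<And>\<delta>. \<delta> > 0 \<Longrightarrow> \<exists>x\<in>M. \<exists>m\<ge>1. d ((f ^^ m) x) x \<le> \<delta> \<and> (\<forall>p\<in>M. (f ^^ m) p \<noteq> p)"
  shows "\<not> strict_periodic_shadowing M d f"
proof
  assume "strict_periodic_shadowing M d f"
  then obtain \<delta> where "\<delta> > 0" and shadow: "\<And>x m. delta_cycle M d f \<delta> x m \<Longrightarrow>
      \<exists>p\<in>Per M f. (f ^^ m) p = p"
    unfolding strict_periodic_shadowing_def by (meson zero_less_one)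
  then obtain x m where x: "x \<in> M" and "m \<ge> 1" and close: "d ((f ^^ m) x) x \<le> \<delta>"
    and no_fix: "\<forall>p\<in>M. (f ^^ m) p \<noteq> p"
    using assms by blast
  define xs where "xs i = (f ^^ (i mod m)) x" for i
  have "delta_cycle M d f \<delta> xs m"
    unfolding delta_cycle_def
  proof (intro conjI allI impI)
    fix i assume "i < m"
    then consider "Suc i < m" | "Suc i = m" by linarith
    then show "d (f (xs i)) (xs (Suc i)) \<le> \<delta>"
      by cases (use \<open>\<delta> > 0\<close> close x in \<open>auto simp: xs_def maps_into funpow_in\<close>)
  qed (use \<open>m \<ge> 1\<close> x funpow_in in \<open>auto simp: xs_def\<close>)
  then show False
    using shadow no_fix by (auto simp: Per_def)
qed

end

locale Ultrametric_space = Metric_space M d for M :: "'a set" and d +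
  assumes ultrametric: "\<lbrakk>x \<in> M; y \<in> M; z \<in> M\<rbrakk> \<Longrightarrow> d x z \<le> max (d x y) (d y z)"
begin

lemma mball_clopen:
  assumes "x \<in> M"
  shows "closedin mtopology (mball x r)"
proof (cases "r > 0")
  case True
  have "mball z r \<subseteq> M - mball x r" if "z \<in> M - mball x r" for z
  proof
    fix w assume w: "w \<in> mball z r"
    have "w \<notin> mball x r"
    proof
      assume "w \<in> mball x r"
      then have "d x z \<le> max (d x w) (d w z)"
        using ultrametric assms that by auto
      also have "\<dots> < r"
        using w \<open>w \<in> mball x r\<close> commute by auto
      finally show False
        using assms that by auto
    qed
    with w show "w \<in> M - mball x r" by auto
  qed
  then show ?thesis
    using True by (auto simp: closedin_def openin_mtopology)
qed (metis closedin_empty mball_eq_empty not_less)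

lemma totally_disconnected:
  assumes "S \<subseteq> M" "connectedin mtopology S" "x \<in> S" "y \<in> S"
  shows "x = y"
proof (rule ccontr)
  assume "x \<noteq> y"
  moreover have "x \<in> M" "y \<in> M"
    using assms by auto
  ultimately have "x \<in> mball x (d x y)" "y \<notin> mball x (d x y)"
    by auto
  moreover have "S \<subseteq> mball x (d x y) \<or> disjnt S (mball x (d x y))"
    by (rule connectedin_clopen_cases[OF assms(2) mball_clopen[OF \<open>x \<in> M\<close>] openin_mball])
  ultimately show False
    using assms(3,4) unfolding disjnt_def by blast
qed

end

locale ultrametric_isometry = Ultrametric_space M d + metric_isometry M d f
  for M :: "'a set" and d and f
begin

lemma delta_cycle_follows_orbit:
  assumes cycle: "delta_cycle M d f \<delta> x m"
  shows "i \<le> m \<Longrightarrow> d ((f ^^ i) (x 0)) (x i) \<le> \<delta>"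
proof (induction i)
  case 0
  have steps: "\<forall>i<m. d (f (x i)) (x (Suc i)) \<le> \<delta>" and "0 < m" and "x 0 \<in> M"
    using cycle by (auto simp: delta_cycle_def)
  have "0 \<le> d (f (x 0)) (x (Suc 0))"
    by simp
  also have "\<dots> \<le> \<delta>"
    using steps \<open>0 < m\<close> by blast
  finally show ?case
    using \<open>x 0 \<in> M\<close> by simp
next
  case (Suc i)
  have in_M: "x i \<in> M" "x (Suc i) \<in> M" "x 0 \<in> M"
    using cycle Suc.prems by (auto simp: delta_cycle_def)
  then have "d ((f ^^ Suc i) (x 0)) (x (Suc i))
      \<le> max (d (f ((f ^^ i) (x 0))) (f (x i))) (d (f (x i)) (x (Suc i)))"
    by (simp add: ultrametric funpow_in maps_into)
  also have "\<dots> = max (d ((f ^^ i) (x 0)) (x i)) (d (f (x i)) (x (Suc i)))"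
    using in_M by (simp add: isometric funpow_in)
  also have "\<dots> \<le> \<delta>"
    using Suc cycle by (simp add: delta_cycle_def)
  finally show ?case .
qed

lemma shadowing_by_close_point:
  assumes cycle: "delta_cycle M d f \<delta> x m" and p: "p \<in> M" "d (x 0) p \<le> \<delta>" and "i \<le> m"
  shows "d (x i) ((f ^^ i) p) \<le> \<delta>"
proof -
  have in_M: "x i \<in> M" "x 0 \<in> M"
    using cycle \<open>i \<le> m\<close> by (auto simp: delta_cycle_def)
  then have "d (x i) ((f ^^ i) p) \<le> max (d (x i) ((f ^^ i) (x 0))) (d ((f ^^ i) (x 0)) ((f ^^ i) p))"
    using p by (simp add: ultrametric funpow_in)
  also have "\<dots> \<le> \<delta>"
    using delta_cycle_follows_orbit[OF cycle \<open>i \<le> m\<close>] in_M p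
    by (simp add: commute funpow_in funpow_isometric)
  finally show ?thesis .
qed

lemma periodic_shadowing_if_dense_Per:
  assumes dense: "mtopology closure_of Per M f = M"
  shows "periodic_shadowing M d f"
  unfolding periodic_shadowing_def
proof (intro allI impI exI conjI)
  fix e :: real and x m
  assume "e > 0" and cycle: "delta_cycle M d f e x m"
  have "x 0 \<in> mtopology closure_of Per M f"
    using cycle dense by (simp add: delta_cycle_def)
  then obtain p where p: "p \<in> Per M f" "p \<in> mball (x 0) e"
    using \<open>e > 0\<close> unfolding metric_closure_of by blast
  then have "p \<in> M" "d (x 0) p \<le> e"
    by (auto simp: Per_def)
  with p show "\<exists>p\<in>Per M f. \<forall>i\<le>m. d (x i) ((f ^^ i) p) \<le> e"
    using shadowing_by_close_point[OF cycle] by blast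
qed

lemma strict_periodic_shadowing_if_almost_fixed_near_fixed:
  assumes "\<And>e. e > 0 \<Longrightarrow> \<exists>\<delta>>0. \<forall>x\<in>M. \<forall>m\<ge>1. d ((f ^^ m) x) x \<le> \<delta> \<longrightarrow>
      (\<exists>p\<in>M. (f ^^ m) p = p \<and> d x p \<le> e)"
  shows "strict_periodic_shadowing M d f"
  unfolding strict_periodic_shadowing_def
proof (intro allI impI)
  fix e :: real
  assume "e > 0"
  then obtain \<delta> where "\<delta> > 0" and near: "\<forall>x\<in>M. \<forall>m\<ge>1. d ((f ^^ m) x) x \<le> \<delta> \<longrightarrow>
      (\<exists>p\<in>M. (f ^^ m) p = p \<and> d x p \<le> e)"
    using assms by blast
  show "\<exists>\<delta>>0. \<forall>x m. delta_cycle M d f \<delta> x m \<longrightarrow>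
      (\<exists>p\<in>Per M f. (f ^^ m) p = p \<and> (\<forall>i\<le>m. d (x i) ((f ^^ i) p) \<le> e))"
  proof (intro exI conjI allI impI)
    show "min \<delta> e > 0"
      using \<open>\<delta> > 0\<close> \<open>e > 0\<close> by simp
    fix x m
    assume cycle: "delta_cycle M d f (min \<delta> e) x m"
    then have "x 0 \<in> M" "m \<ge> 1" "d ((f ^^ m) (x 0)) (x 0) \<le> \<delta>"
      using delta_cycle_follows_orbit[OF cycle, of m] by (auto simp: delta_cycle_def)
    then obtain p where p: "p \<in> M" "(f ^^ m) p = p" "d (x 0) p \<le> e"
      using near by blast
    then have "p \<in> Per M f"
      using \<open>m \<ge> 1\<close> by (auto simp: Per_def intro!: exI[of _ m])
    moreover have "d (x i) ((f ^^ i) p) \<le> e" if "i \<le> m" for i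
      by (rule shadowing_by_close_point[OF delta_cycle_mono[OF cycle min.cobounded2] p(1) p(3) that])
    ultimately show "\<exists>p\<in>Per M f. (f ^^ m) p = p \<and> (\<forall>i\<le>m. d (x i) ((f ^^ i) p) \<le> e)"
      using p by blast
  qed
qed

end

section \<open>The first-difference ultrametric on sequences\<close>

definition agree_upto :: "nat \<Rightarrow> (nat \<Rightarrow> 'a) \<Rightarrow> (nat \<Rightarrow> 'a) \<Rightarrow> bool" where
  "agree_upto N c c' \<longleftrightarrow> (\<forall>n<N. c n = c' n)"

lemma agree_upto_sym: "agree_upto N c c' \<Longrightarrow> agree_upto N c' c"
  by (simp add: agree_upto_def)

lemma agree_upto_all_iff: "(\<forall>N. agree_upto N c c') \<longleftrightarrow> c = c'"
  by (auto simp: agree_upto_def)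

definition seq_dist :: "(nat \<Rightarrow> 'a) \<Rightarrow> (nat \<Rightarrow> 'a) \<Rightarrow> real" where
  "seq_dist c c' = (if c = c' then 0 else (1/2) ^ (LEAST n. c n \<noteq> c' n))"

lemma seq_dist_nonneg: "0 \<le> seq_dist c c'"
  by (simp add: seq_dist_def)

lemma seq_dist_eq_0_iff: "seq_dist c c' = 0 \<longleftrightarrow> c = c'"
  by (simp add: seq_dist_def)

lemma seq_dist_le_iff: "seq_dist c c' \<le> (1/2) ^ N \<longleftrightarrow> agree_upto N c c'"
proof (cases "c = c'")
  case False
  define L where "L = (LEAST n. c n \<noteq> c' n)"
  obtain k where "c k \<noteq> c' k"
    using False by auto
  then have first_diff: "c L \<noteq> c' L"
    unfolding L_def by (rule LeastI)
  have "n < L \<Longrightarrow> c n = c' n" for n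
    unfolding L_def using not_less_Least by blast
  with first_diff have "agree_upto N c c' \<longleftrightarrow> N \<le> L"
    unfolding agree_upto_def by (meson leI order.strict_trans2)
  with False show ?thesis
    by (simp add: seq_dist_def L_def)
qed (simp add: agree_upto_def seq_dist_def)

lemma seq_dist_ge: "c n \<noteq> c' n \<Longrightarrow> (1/2) ^ n \<le> seq_dist c c'"
  by (auto simp: seq_dist_def intro: Least_le)

lemma seq_dist_ultrametric: "seq_dist a c \<le> max (seq_dist a b) (seq_dist b c)"
proof (cases "a = c")
  case False
  define L where "L = (LEAST n. a n \<noteq> c n)"
  have "a L \<noteq> c L"
    using False LeastI_ex[of "\<lambda>n. a n \<noteq> c n"] by (auto simp: L_def fun_eq_iff)
  then have "(1/2) ^ L \<le> seq_dist a b \<or> (1/2) ^ L \<le> seq_dist b c"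
    by (metis seq_dist_ge)
  moreover have "seq_dist a c = (1/2) ^ L"
    using False by (simp add: seq_dist_def L_def)
  ultimately show ?thesis
    by (metis le_max_iff_disj)
qed (metis seq_dist_eq_0_iff seq_dist_nonneg le_max_iff_disj)

lemma seq_dist_eqI:
  assumes "\<And>N. agree_upto N a b \<longleftrightarrow> agree_upto N a' b'"
  shows "seq_dist a b = seq_dist a' b'"
proof (cases "a = b")
  case True
  then show ?thesis
    using assms agree_upto_all_iff by (metis seq_dist_eq_0_iff)
next
  case False
  then have "a' \<noteq> b'"
    using assms agree_upto_all_iff by metis
  with False obtain L L' where L: "seq_dist a b = (1/2) ^ L" and L': "seq_dist a' b' = (1/2) ^ L'"
    by (auto simp: seq_dist_def)
  have "agree_upto L a' b'" "agree_upto L' a b"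
    using assms seq_dist_le_iff[of a b] seq_dist_le_iff[of a' b'] L L' by auto
  then have "L \<le> L'" "L' \<le> L"
    using seq_dist_le_iff[of a b] seq_dist_le_iff[of a' b'] L L' by auto
  then show ?thesis
    using L L' by simp
qed

section \<open>Admissible sequences and their rotations\<close>

definition modulus :: "nat \<Rightarrow> nat" where
  "modulus n = 2 ^ Suc n"

abbreviation marked :: "(nat \<Rightarrow> nat) \<Rightarrow> nat \<Rightarrow> bool" where
  "marked c n \<equiv> modulus n \<le> c n"

definition admissible :: "(nat \<Rightarrow> nat) \<Rightarrow> bool" where
  "admissible c \<longleftrightarrow> (\<forall>n. c n < modulus n + 3) \<and> (\<forall>n m. marked c n \<longrightarrow> marked c m \<longrightarrow> n = m)"

definition turn :: "(nat \<Rightarrow> nat) \<Rightarrow> nat \<Rightarrow> (nat \<Rightarrow> nat) \<Rightarrow> nat \<Rightarrow> nat" where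
  "turn a b c n =
     (if \<exists>k<n. marked c k then c n
      else if marked c n then modulus n + (c n - modulus n + b) mod 3
      else (c n + a n) mod modulus n)"

lemma modulus_pos [simp]: "0 < modulus n"
  by (simp add: modulus_def)

lemma modulus_dvd_modulus: "n \<le> j \<Longrightarrow> modulus n dvd modulus j"
  unfolding modulus_def by (simp add: le_imp_power_dvd)

lemma marked_unique: "\<lbrakk>admissible c; marked c n; marked c m\<rbrakk> \<Longrightarrow> n = m"
  by (simp add: admissible_def)

lemma marked_value_bound: "admissible c \<Longrightarrow> c n - modulus n < 3"
  unfolding admissible_def by (metis less_diff_conv2 add.commute diff_is_0_eq' nat_le_linear zero_less_numeral)

lemma dvd_if_add_mod_eq:
  assumes "(x::nat) < q" "(x + t) mod q = x"
  shows "q dvd t"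
proof -
  have "x mod q = (x + t) mod q"
    using assms by simp
  then have "q dvd (x + t) - x"
    using mod_eq_dvd_iff_nat[of x "x + t" q] by simp
  then show ?thesis
    by simp
qed

lemma marked_turn_iff [simp]: "marked (turn a b c) n \<longleftrightarrow> marked c n"
  by (simp add: turn_def not_le)

lemma turn_turn: "turn a b (turn a' b' c) = turn (\<lambda>n. a' n + a n) (b' + b) c"
proof
  fix n
  consider (before) "\<exists>k<n. marked c k" | (here) "\<forall>k<n. \<not> marked c k" "marked c n"
    | (free) "\<forall>k<n. \<not> marked c k" "\<not> marked c n"
    by blast
  then show "turn a b (turn a' b' c) n = turn (\<lambda>n. a' n + a n) (b' + b) c n"
  proof cases
    case before
    then show ?thesis
      by (simp add: turn_def[of a b "turn a' b' c"]) (simp add: turn_def)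
  next
    case here
    then have "turn a b (turn a' b' c) n = modulus n + (turn a' b' c n - modulus n + b) mod 3"
      by (auto simp: turn_def[of a b "turn a' b' c"])
    also have "turn a' b' c n - modulus n = (c n - modulus n + b') mod 3"
      using here by (auto simp: turn_def)
    also have "modulus n + ((c n - modulus n + b') mod 3 + b) mod 3
        = modulus n + (c n - modulus n + (b' + b)) mod 3"
      by (simp add: mod_add_left_eq add.assoc)
    also have "\<dots> = turn (\<lambda>n. a' n + a n) (b' + b) c n"
      using here by (auto simp: turn_def)
    finally show ?thesis .
  next
    case free
    then have "turn a b (turn a' b' c) n = (turn a' b' c n + a n) mod modulus n"
      by (auto simp: turn_def[of a b "turn a' b' c"])
    also have "turn a' b' c n = (c n + a' n) mod modulus n"
      using free by (auto simp: turn_def)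
    also have "((c n + a' n) mod modulus n + a n) mod modulus n = (c n + (a' n + a n)) mod modulus n"
      by (simp add: mod_add_left_eq add.assoc)
    also have "\<dots> = turn (\<lambda>n. a' n + a n) (b' + b) c n"
      using free by (auto simp: turn_def)
    finally show ?thesis .
  qed
qed

lemma admissible_turn:
  assumes "admissible c"
  shows "admissible (turn a b c)"
proof -
  have "turn a b c n < modulus n + 3" for n
    using assms by (auto simp: turn_def admissible_def intro: trans_less_add1)
  with assms show ?thesis
    by (simp add: admissible_def)
qed

lemma agree_upto_turn:
  assumes "agree_upto N c c'"
  shows "agree_upto N (turn a b c) (turn a b c')"
  unfolding agree_upto_def
proof (intro allI impI)
  fix n assume "n < N"
  then have "c n = c' n" "(\<exists>k<n. marked c k) \<longleftrightarrow> (\<exists>k<n. marked c' k)"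
    using assms by (auto simp: agree_upto_def)
  then show "turn a b c n = turn a b c' n"
    by (simp only: turn_def)
qed

lemma turn_eq_self:
  assumes c: "admissible c"
    and a: "\<And>n. \<forall>k<n. \<not> marked c k \<Longrightarrow> \<not> marked c n \<Longrightarrow> modulus n dvd a n"
    and b: "\<And>n. \<forall>k<n. \<not> marked c k \<Longrightarrow> marked c n \<Longrightarrow> 3 dvd b"
  shows "turn a b c = c"
proof
  fix n
  show "turn a b c n = c n"
  proof (cases "\<exists>k<n. marked c k")
    case False
    show ?thesis
    proof (cases "marked c n")
      case True
      have "3 dvd b"
        using b False True by blast
      then obtain t where "b = 3 * t" ..
      then have "(x + b) mod 3 = x" if "x < 3" for x
        using that by simp
      then have "(c n - modulus n + b) mod 3 = c n - modulus n"
        using marked_value_bound[OF c] by blast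
      with False True show ?thesis
        by (simp add: turn_def)
    next
      case unmarked: False
      have "modulus n dvd a n"
        using a False unmarked by blast
      then obtain t where "a n = modulus n * t" ..
      moreover have "c n < modulus n"
        using unmarked by simp
      ultimately have "(c n + a n) mod modulus n = c n"
        by simp
      with False unmarked show ?thesis
        by (simp add: turn_def)
    qed
  qed (simp add: turn_def)
qed

definition step :: "(nat \<Rightarrow> nat) \<Rightarrow> nat \<Rightarrow> nat" where
  "step = turn (\<lambda>_. 1) 1"

definition unstep :: "(nat \<Rightarrow> nat) \<Rightarrow> nat \<Rightarrow> nat" where
  "unstep = turn (\<lambda>n. modulus n - 1) 2"

lemma unstep_step: "admissible c \<Longrightarrow> unstep (step c) = c"
  unfolding unstep_def step_def turn_turn by (rule turn_eq_self) (auto simp: Suc_leI numeral_3_eq_3)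

lemma step_unstep: "admissible c \<Longrightarrow> step (unstep c) = c"
  unfolding unstep_def step_def turn_turn by (rule turn_eq_self) (auto simp: Suc_leI numeral_3_eq_3)

lemma funpow_step: "admissible c \<Longrightarrow> (step ^^ i) c = turn (\<lambda>_. i) i c"
proof (induction i)
  case 0
  then show ?case
    by (simp add: turn_eq_self)
next
  case (Suc i)
  then show ?case
    by (simp add: step_def turn_turn)
qed

lemma agree_upto_step_iff:
  assumes "admissible c" "admissible c'"
  shows "agree_upto N (step c) (step c') \<longleftrightarrow> agree_upto N c c'"
  using agree_upto_turn[of N "step c" "step c'"] agree_upto_turn[of N c c']
  by (metis assms step_def unstep_def unstep_step)

lemma exists_marked_approximation:
  assumes "admissible c"
  obtains c' j where "admissible c'" "agree_upto N c c'" "j \<le> N" "marked c' j"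
proof (cases "\<exists>j<N. marked c j")
  case True
  then obtain j where "j < N" "marked c j"
    by blast
  then show ?thesis
    using assms that[of c j] by (simp add: agree_upto_def)
next
  case False
  define c' where "c' n = (if n < N then c n else if n = N then modulus N else 0)" for n
  have "admissible c'"
    using assms False by (auto simp: admissible_def c'_def)
  moreover have "agree_upto N c c'"
    by (simp add: agree_upto_def c'_def)
  ultimately show ?thesis
    using that[of c' N] by (simp add: c'_def)
qed

lemma turn_eq_self_if_marked:
  assumes "admissible c" "marked c j" "\<And>n. n < j \<Longrightarrow> modulus n dvd a n" "3 dvd b"
  shows "turn a b c = c"
proof (rule turn_eq_self)
  fix n
  assume "\<forall>k<n. \<not> marked c k" "\<not> marked c n"
  then have "n < j"
    using assms(2) by (metis linorder_neqE_nat)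
  then show "modulus n dvd a n"
    by (rule assms(3))
qed (use assms in auto)

lemma turn_power_of_two_ne:
  assumes c: "admissible c"
  shows "turn (\<lambda>_. 2 ^ j) (2 ^ j) c \<noteq> c"
proof
  assume fixed: "turn (\<lambda>_. 2 ^ j) (2 ^ j) c = c"
  show False
  proof (cases "\<exists>k. marked c k")
    case True
    then obtain k where k: "marked c k" ..
    then have "\<not> (\<exists>k'<k. marked c k')"
      using marked_unique[OF c] by blast
    then have "turn (\<lambda>_. 2 ^ j) (2 ^ j) c k = modulus k + (c k - modulus k + 2 ^ j) mod 3"
      using k by (simp only: turn_def if_False if_True)
    then have "(c k - modulus k + 2 ^ j) mod 3 = c k - modulus k"
      using fixed k by simp
    then have "3 dvd (2::nat) ^ j"
      using dvd_if_add_mod_eq marked_value_bound[OF c] by blast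
    moreover have "coprime (3::nat) (2 ^ j)"
      by simp
    ultimately have "is_unit (3::nat)"
      using coprime_absorb_left by blast
    then show False
      by simp
  next
    case False
    then have "\<not> (\<exists>k<j. marked c k)" "\<not> marked c j"
      by auto
    then have "turn (\<lambda>_. 2 ^ j) (2 ^ j) c j = (c j + 2 ^ j) mod modulus j"
      by (simp only: turn_def if_False)
    then have "(c j + 2 ^ j) mod modulus j = c j" "c j < modulus j"
      using fixed \<open>\<not> marked c j\<close> by auto
    then have "modulus j dvd 2 ^ j"
      using dvd_if_add_mod_eq by blast
    then show False
      using dvd_imp_le[of "modulus j" "2 ^ j"] by (simp add: modulus_def)
  qed
qed

lemma agree_upto_turn_power_of_two:
  assumes "\<forall>n<j. \<not> marked c n"
  shows "agree_upto j (turn (\<lambda>_. 2 ^ j) (2 ^ j) c) c"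
  unfolding agree_upto_def
proof (intro allI impI)
  fix n assume "n < j"
  then have "\<not> (\<exists>k<n. marked c k)" "\<not> marked c n"
    using assms by auto
  then have "turn (\<lambda>_. 2 ^ j) (2 ^ j) c n = (c n + 2 ^ j) mod modulus n"
    by (simp only: turn_def if_False)
  moreover have "modulus n dvd 2 ^ j"
    using \<open>n < j\<close> unfolding modulus_def by (intro le_imp_power_dvd) simp
  ultimately show "turn (\<lambda>_. 2 ^ j) (2 ^ j) c n = c n"
    using \<open>\<not> marked c n\<close> by auto
qed

lemma exists_fixed_approximation:
  assumes c: "admissible c" and close: "agree_upto N (turn (\<lambda>_. k) k c) c" and "3 dvd k"
  obtains c' where "admissible c'" "agree_upto N c c'" "turn (\<lambda>_. k) k c' = c'"
proof -
  obtain c' j where c': "admissible c'" "agree_upto N c c'" "j \<le> N" "marked c' j"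
    using exists_marked_approximation[OF c] .
  have "modulus n dvd k" if "n < j" for n
  proof -
    have "\<not> marked c' i" if "i \<le> n" for i
    proof
      assume "marked c' i"
      then have "i = j"
        using marked_unique[OF c'(1) _ c'(4)] by blast
      with that \<open>n < j\<close> show False
        by simp
    qed
    moreover have "c i = c' i" if "i \<le> n" for i
      using c'(2) that \<open>n < j\<close> \<open>j \<le> N\<close> by (simp add: agree_upto_def)
    ultimately have "\<not> marked c i" if "i \<le> n" for i
      using that by metis
    then have "\<not> (\<exists>i<n. marked c i)" "\<not> marked c n"
      by (meson less_imp_le order_refl)+
    then have "turn (\<lambda>_. k) k c n = (c n + k) mod modulus n"
      by (simp only: turn_def if_False)
    moreover have "turn (\<lambda>_. k) k c n = c n"
      using close \<open>n < j\<close> \<open>j \<le> N\<close> by (simp add: agree_upto_def)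
    ultimately have "(c n + k) mod modulus n = c n"
      by simp
    moreover have "c n < modulus n"
      using \<open>\<not> marked c n\<close> by simp
    ultimately show ?thesis
      by (intro dvd_if_add_mod_eq)
  qed
  then have "turn (\<lambda>_. k) k c' = c'"
    using \<open>3 dvd k\<close> by (intro turn_eq_self_if_marked[OF c'(1) c'(4)])
  with c' that show thesis
    by blast
qed

lemma exists_admissible_neighbour:
  assumes c: "admissible c"
  obtains c' where "admissible c'" "c' \<noteq> c" "agree_upto N c c'"
proof -
  \<comment> \<open>at most one of the entries N and N + 1 is marked; change an unmarked one\<close>
  define p where "p = (if marked c N then Suc N else N)"
  have "N \<le> p" "\<not> marked c p"
    using marked_unique[OF c, of N "Suc N"] by (auto simp: p_def)
  define c' where "c' = c(p := (if c p = 0 then 1 else 0))"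
  have "c' p < modulus p"
    using one_less_power[of "2::nat" "Suc p"] by (simp add: c'_def modulus_def)
  then have "marked c' n \<longleftrightarrow> marked c n" for n
    using \<open>\<not> marked c p\<close> by (cases "n = p") (auto simp: c'_def)
  with c \<open>c' p < modulus p\<close> have "admissible c'"
    unfolding admissible_def by (metis c'_def fun_upd_other trans_less_add1)
  moreover have "c' \<noteq> c"
    by (auto simp: c'_def fun_eq_iff)
  moreover have "agree_upto N c c'"
    using \<open>N \<le> p\<close> by (simp add: agree_upto_def c'_def)
  ultimately show thesis
    using that by blast
qed

definition truncate :: "nat \<Rightarrow> (nat \<Rightarrow> nat) \<Rightarrow> nat \<Rightarrow> nat" where
  "truncate N c n = (if n < N then c n else 0)"

lemma admissible_truncate:
  assumes "admissible c"
  shows "admissible (truncate N c)"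
proof -
  have "marked c n" if "marked (truncate N c) n" for n
    using that by (simp add: truncate_def split: if_splits)
  with assms show ?thesis
    unfolding admissible_def by (simp add: truncate_def)
qed

lemma agree_upto_truncate: "agree_upto N c (truncate N c)"
  by (simp add: agree_upto_def truncate_def)

lemma finite_truncations: "finite (truncate N ` {c. admissible c})"
proof (rule finite_subset)
  show "finite {c. \<forall>n. (n \<in> {..<N} \<longrightarrow> c n \<in> {..<modulus N + 3}) \<and> (n \<notin> {..<N} \<longrightarrow> c n = 0)}"
    (is "finite ?bounded") by (rule finite_set_of_finite_funs) simp_all
  show "truncate N ` {c. admissible c} \<subseteq> ?bounded"
  proof
    fix t assume "t \<in> truncate N ` {c. admissible c}"
    then obtain c where "admissible c" "t = truncate N c"
      by blast
    have "c n < modulus N + 3" if "n < N" for n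
    proof -
      have "modulus n \<le> modulus N"
        using that by (simp add: modulus_def)
      moreover have "c n < modulus n + 3"
        using \<open>admissible c\<close> by (simp add: admissible_def)
      ultimately show ?thesis
        by linarith
    qed
    then show "t \<in> ?bounded"
      using \<open>t = truncate N c\<close> by (simp add: truncate_def)
  qed
qed

lemma half_power_less: "0 < e \<Longrightarrow> \<exists>N. (1/2::real) ^ N < e"
  using real_arch_pow_inv[of e "1/2"] by simp

text \<open>Only the cardinality of the reals matters: the sequence space is carried into the reals by
  an arbitrary injection and the metric is pulled back along it.\<close>

lemma ex_inj_sequences_into_real: "\<exists>e :: (nat \<Rightarrow> nat) \<Rightarrow> real. inj e"
proof -
  define graph where "graph c = range (\<lambda>n. prod_encode (n, c n))" for c :: "nat \<Rightarrow> nat"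
  have "inj graph"
  proof (rule injI)
    fix c c' assume "graph c = graph c'"
    show "c = c'"
    proof
      fix n
      have "prod_encode (n, c n) \<in> graph c'"
        using \<open>graph c = graph c'\<close> by (auto simp: graph_def)
      then show "c n = c' n"
        by (auto simp: graph_def)
    qed
  qed
  moreover obtain h :: "nat set \<Rightarrow> real" where "bij h"
    using nat_sets_eqpoll_reals unfolding eqpoll_def by blast
  ultimately have "inj (h \<circ> graph)"
    by (simp add: bij_is_inj inj_compose)
  then show ?thesis
    by blast
qed

definition code :: "(nat \<Rightarrow> nat) \<Rightarrow> real" where
  "code = (SOME e. inj e)"

definition decode :: "real \<Rightarrow> nat \<Rightarrow> nat" where
  "decode = inv code"

lemma inj_code: "inj code"
  unfolding code_def using ex_inj_sequences_into_real by (rule someI_ex)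

lemma decode_code [simp]: "decode (code c) = c"
  using inj_code by (simp add: decode_def)

definition rot_space :: "real set" where
  "rot_space = code ` {c. admissible c}"

definition rot_dist :: "real \<Rightarrow> real \<Rightarrow> real" where
  "rot_dist x y = seq_dist (decode x) (decode y)"

definition rot_map :: "real \<Rightarrow> real" where
  "rot_map x = code (step (decode x))"

lemma code_in_rot_space_iff [simp]: "code c \<in> rot_space \<longleftrightarrow> admissible c"
  unfolding rot_space_def using inj_code by (auto dest: injD)

lemma admissible_decode: "x \<in> rot_space \<Longrightarrow> admissible (decode x)"
  by (auto simp: rot_space_def)

lemma code_decode: "x \<in> rot_space \<Longrightarrow> code (decode x) = x"
  by (auto simp: rot_space_def)

lemma rot_dist_le_iff: "rot_dist x y \<le> (1/2) ^ N \<longleftrightarrow> agree_upto N (decode x) (decode y)"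
  by (simp add: rot_dist_def seq_dist_le_iff)

interpretation rot: ultrametric_isometry rot_space rot_dist rot_map
proof
  fix x y z
  show "0 \<le> rot_dist x y"
    by (simp add: rot_dist_def seq_dist_nonneg)
  show "rot_dist x y = rot_dist y x"
    unfolding rot_dist_def by (rule seq_dist_eqI) (auto simp: agree_upto_def)
  show "x \<in> rot_space \<Longrightarrow> y \<in> rot_space \<Longrightarrow> rot_dist x y = 0 \<longleftrightarrow> x = y"
    by (metis rot_dist_def seq_dist_eq_0_iff code_decode)
  have ultra: "rot_dist x z \<le> max (rot_dist x y) (rot_dist y z)"
    unfolding rot_dist_def by (rule seq_dist_ultrametric)
  then show "x \<in> rot_space \<Longrightarrow> y \<in> rot_space \<Longrightarrow> z \<in> rot_space \<Longrightarrow>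
      rot_dist x z \<le> max (rot_dist x y) (rot_dist y z)"
    by simp
  have "0 \<le> rot_dist x y" "0 \<le> rot_dist y z"
    by (simp_all add: rot_dist_def seq_dist_nonneg)
  with ultra show "rot_dist x z \<le> rot_dist x y + rot_dist y z"
    by linarith
  show "x \<in> rot_space \<Longrightarrow> y \<in> rot_space \<Longrightarrow> rot_dist (rot_map x) (rot_map y) = rot_dist x y"
    unfolding rot_dist_def rot_map_def
    by (intro seq_dist_eqI) (simp add: admissible_decode agree_upto_step_iff)
  show "bij_betw rot_map rot_space rot_space"
  proof (rule bij_betw_byWitness[where f' = "\<lambda>x. code (unstep (decode x))"])
    show "\<forall>x\<in>rot_space. code (unstep (decode (rot_map x))) = x"
      by (simp add: rot_map_def admissible_decode unstep_step code_decode)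
    show "\<forall>x\<in>rot_space. rot_map (code (unstep (decode x))) = x"
      by (simp add: rot_map_def admissible_decode step_unstep code_decode)
    show "rot_map ` rot_space \<subseteq> rot_space"
      by (auto simp: rot_map_def step_def admissible_decode admissible_turn)
    show "(\<lambda>x. code (unstep (decode x))) ` rot_space \<subseteq> rot_space"
      by (auto simp: unstep_def admissible_decode admissible_turn)
  qed
qed

lemma funpow_rot_map:
  assumes "x \<in> rot_space"
  shows "(rot_map ^^ i) x = code (turn (\<lambda>_. i) i (decode x))"
proof -
  have "(rot_map ^^ i) x = code ((step ^^ i) (decode x))"
    by (induction i) (simp_all add: code_decode assms rot_map_def)
  then show ?thesis
    by (simp add: funpow_step admissible_decode assms)
qed

lemma decode_funpow_rot_map:
  "x \<in> rot_space \<Longrightarrow> decode ((rot_map ^^ i) x) = turn (\<lambda>_. i) i (decode x)"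
  by (simp add: funpow_rot_map)

lemma marked_in_Per:
  assumes "admissible c" "marked c j"
  shows "code c \<in> Per rot_space rot_map"
proof -
  have "turn (\<lambda>_. 3 * modulus j) (3 * modulus j) c = c"
    using assms by (intro turn_eq_self_if_marked) (auto intro!: dvd_mult modulus_dvd_modulus)
  then have "(rot_map ^^ (3 * modulus j)) (code c) = code c"
    using assms(1) by (simp add: funpow_rot_map)
  then show ?thesis
    using assms by (auto simp: Per_def intro!: exI[of _ "3 * modulus j"])
qed

lemma rot_dense_Per: "rot.mtopology closure_of Per rot_space rot_map = rot_space"
proof
  show "rot.mtopology closure_of Per rot_space rot_map \<subseteq> rot_space"
    using closure_of_subset_topspace by fastforce
  show "rot_space \<subseteq> rot.mtopology closure_of Per rot_space rot_map"
    unfolding rot.metric_closure_of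
  proof (intro subsetI CollectI conjI allI impI)
    fix x r :: real
    assume "x \<in> rot_space" "0 < r"
    then obtain N where N: "(1/2) ^ N < r"
      using half_power_less by blast
    obtain c j where c: "admissible c" "agree_upto N (decode x) c" "marked c j"
      using exists_marked_approximation[OF admissible_decode[OF \<open>x \<in> rot_space\<close>]] by metis
    have "rot_dist x (code c) < r"
      using c(2) N rot_dist_le_iff[of x "code c" N] by simp
    then show "\<exists>y\<in>Per rot_space rot_map. y \<in> rot.mball x r"
      using marked_in_Per[OF c(1,3)] \<open>x \<in> rot_space\<close> c(1) by (intro bexI[of _ "code c"]) auto
  qed
qed

lemma rot_not_strict_periodic_shadowing: "\<not> strict_periodic_shadowing rot_space rot_dist rot_map"
proof (rule rot.not_strict_periodic_shadowing_if_unclosable)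
  fix \<delta> :: real
  assume "\<delta> > 0"
  then obtain N where N: "(1/2) ^ N < \<delta>"
    using half_power_less by blast
  define c where "c n = (if n = N then modulus N else 0)" for n
  have c: "admissible c" "\<forall>n<N. \<not> marked c n"
    by (auto simp: c_def admissible_def modulus_def)
  have "decode ((rot_map ^^ 2 ^ N) (code c)) = turn (\<lambda>_. 2 ^ N) (2 ^ N) c"
    using decode_funpow_rot_map[of "code c"] c(1) by simp
  then have "rot_dist ((rot_map ^^ 2 ^ N) (code c)) (code c) \<le> (1/2) ^ N"
    using agree_upto_turn_power_of_two[OF c(2)] by (simp add: rot_dist_le_iff)
  with N have "rot_dist ((rot_map ^^ 2 ^ N) (code c)) (code c) \<le> \<delta>"
    by linarith
  moreover have "(rot_map ^^ 2 ^ N) p \<noteq> p" if "p \<in> rot_space" for p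
    using turn_power_of_two_ne[OF admissible_decode[OF that]] decode_funpow_rot_map[OF that]
    by metis
  ultimately show "\<exists>x\<in>rot_space. \<exists>m\<ge>1. rot_dist ((rot_map ^^ m) x) x \<le> \<delta> \<and>
      (\<forall>p\<in>rot_space. (rot_map ^^ m) p \<noteq> p)"
    using c(1) by (intro bexI[of _ "code c"] exI[of _ "2 ^ N"]) auto
qed

interpretation rot3: ultrametric_isometry rot_space rot_dist "rot_map ^^ 3"
  by (simp add: ultrametric_isometry_def rot.Ultrametric_space_axioms rot.metric_isometry_funpow)

lemma rot_cube_strict_periodic_shadowing: "strict_periodic_shadowing rot_space rot_dist (rot_map ^^ 3)"
proof (rule rot3.strict_periodic_shadowing_if_almost_fixed_near_fixed)
  fix e :: real
  assume "e > 0"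
  then obtain N where N: "(1/2) ^ N < e"
    using half_power_less by blast
  have "\<exists>p\<in>rot_space. ((rot_map ^^ 3) ^^ m) p = p \<and> rot_dist x p \<le> e"
    if x: "x \<in> rot_space" and close: "rot_dist (((rot_map ^^ 3) ^^ m) x) x \<le> (1/2) ^ N" for x m
  proof -
    have iterate: "(rot_map ^^ 3) ^^ m = rot_map ^^ (3 * m)"
      by (simp add: funpow_mult)
    have "agree_upto N (turn (\<lambda>_. 3 * m) (3 * m) (decode x)) (decode x)"
      using close by (simp add: iterate rot_dist_le_iff decode_funpow_rot_map x)
    then obtain c where c: "admissible c" "agree_upto N (decode x) c"
        "turn (\<lambda>_. 3 * m) (3 * m) c = c"
      using exists_fixed_approximation[OF admissible_decode[OF x] _ dvd_triv_left] by blast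
    have "((rot_map ^^ 3) ^^ m) (code c) = code c"
      using c(1,3) by (simp add: iterate funpow_rot_map)
    moreover have "rot_dist x (code c) \<le> e"
      using c(2) N rot_dist_le_iff[of x "code c" N] by simp
    ultimately show ?thesis
      using c(1) by auto
  qed
  then show "\<exists>\<delta>>0. \<forall>x\<in>rot_space. \<forall>m\<ge>1. rot_dist (((rot_map ^^ 3) ^^ m) x) x \<le> \<delta> \<longrightarrow>
      (\<exists>p\<in>rot_space. ((rot_map ^^ 3) ^^ m) p = p \<and> rot_dist x p \<le> e)"
    by (intro exI[of _ "(1/2) ^ N"]) auto
qed

lemma rot_perfect: "x \<in> rot_space \<Longrightarrow> x \<in> rot.mtopology derived_set_of rot_space"
  unfolding rot.metric_derived_set_of
proof (intro CollectI conjI allI impI)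
  fix r :: real
  assume "x \<in> rot_space" "0 < r"
  then obtain N where N: "(1/2) ^ N < r"
    using half_power_less by blast
  obtain c where c: "admissible c" "c \<noteq> decode x" "agree_upto N (decode x) c"
    using exists_admissible_neighbour[OF admissible_decode[OF \<open>x \<in> rot_space\<close>]] by metis
  have "rot_dist x (code c) < r"
    using c(3) N rot_dist_le_iff[of x "code c" N] by simp
  moreover have "code c \<noteq> x"
    using c(2) by auto
  ultimately show "\<exists>y\<in>rot_space. y \<noteq> x \<and> y \<in> rot.mball x r"
    using c(1) \<open>x \<in> rot_space\<close> by (intro bexI[of _ "code c"]) auto
qed (simp)

lemma rot_totally_bounded: "rot.mtotally_bounded rot_space"
  unfolding rot.mtotally_bounded_def
proof (intro allI impI)
  fix e :: real
  assume "0 < e"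
  then obtain N where N: "(1/2) ^ N < e"
    using half_power_less by blast
  define K where "K = code ` truncate N ` {c. admissible c}"
  have "finite K"
    unfolding K_def using finite_truncations by blast
  moreover have "K \<subseteq> rot_space"
    by (auto simp: K_def admissible_truncate)
  moreover have "x \<in> rot.mball (code (truncate N (decode x))) e" if "x \<in> rot_space" for x
  proof -
    have "rot_dist (code (truncate N (decode x))) x \<le> (1/2) ^ N"
      using agree_upto_sym[OF agree_upto_truncate] by (simp add: rot_dist_le_iff)
    then show ?thesis
      using N that admissible_truncate[OF admissible_decode[OF that]] by simp
  qed
  then have "rot_space \<subseteq> (\<Union>y\<in>K. rot.mball y e)"
    using admissible_decode by (fastforce simp: K_def)
  ultimately show "\<exists>K. finite K \<and> K \<subseteq> rot_space \<and> rot_space \<subseteq> (\<Union>y\<in>K. rot.mball y e)"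
    by blast
qed

lemma MCauchy_entries_settle:
  assumes "rot.MCauchy \<sigma>"
  obtains T c where "\<And>k n. T k \<le> n \<Longrightarrow> decode (\<sigma> n) k = c k"
proof -
  have "\<exists>T. \<forall>n n'. T \<le> n \<longrightarrow> T \<le> n' \<longrightarrow> rot_dist (\<sigma> n) (\<sigma> n') < (1/2) ^ Suc k" for k
  proof -
    have "(0::real) < (1/2) ^ Suc k"
      by simp
    then show ?thesis
      using assms unfolding rot.MCauchy_def by blast
  qed
  then obtain T where T: "\<And>k n n'. T k \<le> n \<Longrightarrow> T k \<le> n' \<Longrightarrow> rot_dist (\<sigma> n) (\<sigma> n') < (1/2) ^ Suc k"
    by metis
  have "decode (\<sigma> n) k = decode (\<sigma> (T k)) k" if "T k \<le> n" for k n
  proof -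
    have "rot_dist (\<sigma> n) (\<sigma> (T k)) \<le> (1/2) ^ Suc k"
      using T[OF that order_refl] by simp
    then have "agree_upto (Suc k) (decode (\<sigma> n)) (decode (\<sigma> (T k)))"
      by (simp only: rot_dist_le_iff)
    then show ?thesis
      by (simp add: agree_upto_def)
  qed
  then show thesis
    by (rule that)
qed

lemma rot_complete: "rot.mcomplete"
  unfolding rot.mcomplete_def
proof (intro allI impI)
  fix \<sigma> assume cauchy: "rot.MCauchy \<sigma>"
  then have in_space: "\<sigma> n \<in> rot_space" for n
    by (auto simp: rot.MCauchy_def)
  obtain T c where T: "\<And>k n. T k \<le> n \<Longrightarrow> decode (\<sigma> n) k = c k"
    using MCauchy_entries_settle[OF cauchy] by blast
  have "admissible c"
    unfolding admissible_def
  proof (intro conjI allI impI)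
    fix n
    show "c n < modulus n + 3"
      using admissible_decode[OF in_space] T[OF order_refl] by (metis admissible_def)
  next
    fix a b
    assume "marked c a" "marked c b"
    moreover have "decode (\<sigma> (T a + T b)) a = c a" "decode (\<sigma> (T a + T b)) b = c b"
      by (simp_all add: T)
    ultimately show "a = b"
      using marked_unique[OF admissible_decode[OF in_space]] by metis
  qed
  have "limitin rot.mtopology \<sigma> (code c) sequentially"
    unfolding rot.limitin_metric
  proof (intro conjI allI impI)
    show "code c \<in> rot_space"
      using \<open>admissible c\<close> by simp
    fix e :: real
    assume "0 < e"
    then obtain N where N: "(1/2) ^ N < e"
      using half_power_less by blast
    have "rot_dist (\<sigma> n) (code c) < e" if "(\<Sum>k<N. T k) \<le> n" for n
    proof -
      have "T k \<le> n" if "k < N" for k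
        using member_le_sum[of k "{..<N}" T] that \<open>(\<Sum>k<N. T k) \<le> n\<close> by simp
      then have "agree_upto N (decode (\<sigma> n)) c"
        by (simp add: agree_upto_def T)
      then show ?thesis
        using N rot_dist_le_iff[of "\<sigma> n" "code c" N] by simp
    qed
    then show "\<forall>\<^sub>F n in sequentially. \<sigma> n \<in> rot_space \<and> rot_dist (\<sigma> n) (code c) < e"
      using in_space unfolding eventually_sequentially by blast
  qed
  then show "\<exists>x. limitin rot.mtopology \<sigma> x sequentially"
    by blast
qed

lemma rot_cantor_space: "cantor_space rot_space rot_dist"
  unfolding cantor_space_def
proof (intro conjI ballI allI impI)
  show "Metric_space rot_space rot_dist"
    by (rule rot.Metric_space_axioms)
  have "admissible (\<lambda>_. 0)"
    by (simp add: admissible_def modulus_def)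
  then show "rot_space \<noteq> {}"
    using code_in_rot_space_iff by blast
  show "compact_space rot.mtopology"
    using rot.compact_space_eq_mcomplete_mtotally_bounded rot_complete rot_totally_bounded by blast
  show "x \<in> rot.mtopology derived_set_of rot_space" if "x \<in> rot_space" for x
    using that by (rule rot_perfect)
  show "x = y" if "S \<subseteq> rot_space \<and> connectedin rot.mtopology S" "x \<in> S" "y \<in> S" for S x y
    using that rot.totally_disconnected by blast
qed

theorem mainTheorem13:
  shows "\<exists>(X :: real set) (d :: real \<Rightarrow> real \<Rightarrow> real) (f :: real \<Rightarrow> real).
     cantor_space X d \<and>
     homeomorphic_map (Metric_space.mtopology X d) (Metric_space.mtopology X d) f \<and>
     (Metric_space.mtopology X d) closure_of (Per X f) = X \<and>
     equicontinuous_homeo X d f \<and>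
     periodic_shadowing X d f \<and>
     \<not> strict_periodic_shadowing X d f \<and>
     strict_periodic_shadowing X d (f ^^ 3)"
  using rot_cantor_space rot.homeomorphic rot_dense_Per rot.equicontinuous
    rot.periodic_shadowing_if_dense_Per[OF rot_dense_Per] rot_not_strict_periodic_shadowing
    rot_cube_strict_periodic_shadowing
  by blast

end
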